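(* Let $A,B\in\mathcal{H}$ and $f\in\mathscr{C}(A,B)$. Choose a distinguished triangle $S_A[-1]\overset{s_A}{\to}A\overset{w_A}{\to}W_A\to S_A$ with $S_A\in\mathcal{S},W_A\in\mathcal{W}$, then a distinguished triangle $S_A[-1]\overset{f\circ s_A}{\to}B\overset{m_f}{\to}M_f\to S_A$. Further, choose a distinguished triangle $V\to U\overset{a}{\to}M_f\to V[1]$ with $U\in\mathcal{U},V\in\mathcal{V}$, a distinguished triangle $T[-1]\to S[-1]\overset{b}{\to}U\to T$ with $S\in\mathcal{S},T\in\mathcal{T}$, and a distinguished triangle $S[-1]\overset{a\circ b}{\to}M_f\to Z_{M_f}\to S$. Then the following are equivalent: (1) $\underline{f}\in\underline{\mathcal{H}}(A,B)$ is an epimorphism in $\underline{\mathcal{H}}$; (2) $Z_{M_f}\in\mathcal{W}$; (3) $M_f\in\mathcal{U}$.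
   Context: $\mathscr{C}$ is a triangulated category with shift $[1]$; subcategories are full, additive, closed under isomorphisms and direct summands. $\mathrm{Ext}^1(X,Y)=\mathscr{C}(X,Y[1])$. $\mathcal{M}\ast\mathcal{N}$ is the full subcategory of objects $C$ admitting a distinguished triangle $M\to C\to N\to M[1]$ with $M\in\mathcal{M}$, $N\in\mathcal{N}$. A cotorsion pair $(\mathcal{U},\mathcal{V})$: $\mathrm{Ext}^1(\mathcal{U},\mathcal{V})=0$ and $\mathscr{C}=\mathcal{U}\ast\mathcal{V}[1]$. Fix a twin cotorsion pair, i.e. cotorsion pairs $(\mathcal{S},\mathcal{T}),(\mathcal{U},\mathcal{V})$ with $\mathrm{Ext}^1(\mathcal{S},\mathcal{V})=0$. Put $\mathcal{W}=\mathcal{T}\cap\mathcal{U}$, $\mathscr{C}^-=\mathcal{S}[-1]\ast\mathcal{W}$, $\mathscr{C}^+=\mathcal{W}\ast\mathcal{V}[1]$, $\mathcal{H}=\mathscr{C}^+\cap\mathscr{C}^-$. $\underline{\mathcal{H}}$ is the ideal quotient of $\mathcal{H}$ by morphisms factoring through objects of $\mathcal{W}$, and $\underline{f}$ is the image of $f$. *)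

theory Defs
  imports Main
begin

text \<open>A triangle X -f-> Y -g-> Z -h-> X[1] is the sextuple (X,Y,Z,f,g,h).
cmp g f is the composite "g after f".\<close>

record ('o,'m) tricat =
  Ob    :: "'o set"
  Hom   :: "'o \<Rightarrow> 'o \<Rightarrow> 'm set"
  cmp   :: "'m \<Rightarrow> 'm \<Rightarrow> 'm"
  idm   :: "'o \<Rightarrow> 'm"
  addm  :: "'m \<Rightarrow> 'm \<Rightarrow> 'm"
  zerom :: "'o \<Rightarrow> 'o \<Rightarrow> 'm"
  shO   :: "'o \<Rightarrow> 'o"
  shOi  :: "'o \<Rightarrow> 'o"
  shM   :: "'m \<Rightarrow> 'm"
  Tri   :: "('o \<times> 'o \<times> 'o \<times> 'm \<times> 'm \<times> 'm) set"

definition negm :: "('o,'m,'x) tricat_scheme \<Rightarrow> 'o \<Rightarrow> 'o \<Rightarrow> 'm \<Rightarrow> 'm" where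
  "negm C X Y f = (THE g. g \<in> Hom C X Y \<and> addm C f g = zerom C X Y)"

definition iso :: "('o,'m,'x) tricat_scheme \<Rightarrow> 'o \<Rightarrow> 'o \<Rightarrow> 'm \<Rightarrow> bool" where
  "iso C X Y u \<longleftrightarrow> u \<in> Hom C X Y \<and>
     (\<exists>v\<in>Hom C Y X. cmp C v u = idm C X \<and> cmp C u v = idm C Y)"

definition zero_obj :: "('o,'m,'x) tricat_scheme \<Rightarrow> 'o \<Rightarrow> bool" where
  "zero_obj C Z \<longleftrightarrow> Z \<in> Ob C \<and>
     (\<forall>X\<in>Ob C. Hom C X Z = {zerom C X Z} \<and> Hom C Z X = {zerom C Z X})"

definition is_biproduct :: "('o,'m,'x) tricat_scheme \<Rightarrow> 'o \<Rightarrow> 'o \<Rightarrow> 'o \<Rightarrow> 'm \<Rightarrow> 'm \<Rightarrow> 'm \<Rightarrow> 'm \<Rightarrow> bool" where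
  "is_biproduct C X Y P i1 i2 p1 p2 \<longleftrightarrow>
     i1 \<in> Hom C X P \<and> i2 \<in> Hom C Y P \<and> p1 \<in> Hom C P X \<and> p2 \<in> Hom C P Y \<and>
     cmp C p1 i1 = idm C X \<and> cmp C p2 i2 = idm C Y \<and>
     cmp C p2 i1 = zerom C X Y \<and> cmp C p1 i2 = zerom C Y X \<and>
     addm C (cmp C i1 p1) (cmp C i2 p2) = idm C P"

locale triangulated =
  fixes C :: "('o,'m,'x) tricat_scheme"
  assumes hom_ob: "\<And>X Y. X \<notin> Ob C \<or> Y \<notin> Ob C \<Longrightarrow> Hom C X Y = {}"
    and cmp_closed: "\<And>X Y Z f g. f \<in> Hom C X Y \<Longrightarrow> g \<in> Hom C Y Z \<Longrightarrow> cmp C g f \<in> Hom C X Z"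
    and idm_closed: "\<And>X. X \<in> Ob C \<Longrightarrow> idm C X \<in> Hom C X X"
    and idm_left: "\<And>X Y f. f \<in> Hom C X Y \<Longrightarrow> cmp C (idm C Y) f = f"
    and idm_right: "\<And>X Y f. f \<in> Hom C X Y \<Longrightarrow> cmp C f (idm C X) = f"
    and cmp_assoc: "\<And>W X Y Z f g h. f \<in> Hom C W X \<Longrightarrow> g \<in> Hom C X Y \<Longrightarrow> h \<in> Hom C Y Z \<Longrightarrow>
                      cmp C h (cmp C g f) = cmp C (cmp C h g) f"
    and zerom_closed: "\<And>X Y. X \<in> Ob C \<Longrightarrow> Y \<in> Ob C \<Longrightarrow> zerom C X Y \<in> Hom C X Y"
    and add_closed: "\<And>X Y f g. f \<in> Hom C X Y \<Longrightarrow> g \<in> Hom C X Y \<Longrightarrow> addm C f g \<in> Hom C X Y"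
    and add_comm: "\<And>X Y f g. f \<in> Hom C X Y \<Longrightarrow> g \<in> Hom C X Y \<Longrightarrow> addm C f g = addm C g f"
    and add_assoc: "\<And>X Y f g h. f \<in> Hom C X Y \<Longrightarrow> g \<in> Hom C X Y \<Longrightarrow> h \<in> Hom C X Y \<Longrightarrow>
                      addm C (addm C f g) h = addm C f (addm C g h)"
    and add_zero: "\<And>X Y f. f \<in> Hom C X Y \<Longrightarrow> addm C f (zerom C X Y) = f"
    and add_inv: "\<And>X Y f. f \<in> Hom C X Y \<Longrightarrow> \<exists>g\<in>Hom C X Y. addm C f g = zerom C X Y"
    and cmp_add_left: "\<And>X Y Z f g1 g2. f \<in> Hom C X Y \<Longrightarrow> g1 \<in> Hom C Y Z \<Longrightarrow> g2 \<in> Hom C Y Z \<Longrightarrow>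
                      cmp C (addm C g1 g2) f = addm C (cmp C g1 f) (cmp C g2 f)"
    and cmp_add_right: "\<And>X Y Z f1 f2 g. f1 \<in> Hom C X Y \<Longrightarrow> f2 \<in> Hom C X Y \<Longrightarrow> g \<in> Hom C Y Z \<Longrightarrow>
                      cmp C g (addm C f1 f2) = addm C (cmp C g f1) (cmp C g f2)"
    and zero_obj_ex: "\<exists>Z. zero_obj C Z"
    and biproduct_ex: "\<And>X Y. X \<in> Ob C \<Longrightarrow> Y \<in> Ob C \<Longrightarrow>
                      \<exists>P i1 i2 p1 p2. is_biproduct C X Y P i1 i2 p1 p2"
    and shO_closed: "\<And>X. X \<in> Ob C \<Longrightarrow> shO C X \<in> Ob C"
    and shOi_closed: "\<And>X. X \<in> Ob C \<Longrightarrow> shOi C X \<in> Ob C"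
    and shO_shOi: "\<And>X. X \<in> Ob C \<Longrightarrow> shO C (shOi C X) = X"
    and shOi_shO: "\<And>X. X \<in> Ob C \<Longrightarrow> shOi C (shO C X) = X"
    and shM_bij: "\<And>X Y. X \<in> Ob C \<Longrightarrow> Y \<in> Ob C \<Longrightarrow>
                      bij_betw (shM C) (Hom C X Y) (Hom C (shO C X) (shO C Y))"
    and shM_cmp: "\<And>X Y Z f g. f \<in> Hom C X Y \<Longrightarrow> g \<in> Hom C Y Z \<Longrightarrow>
                      shM C (cmp C g f) = cmp C (shM C g) (shM C f)"
    and shM_idm: "\<And>X. X \<in> Ob C \<Longrightarrow> shM C (idm C X) = idm C (shO C X)"
    and shM_add: "\<And>X Y f g. f \<in> Hom C X Y \<Longrightarrow> g \<in> Hom C X Y \<Longrightarrow>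
                      shM C (addm C f g) = addm C (shM C f) (shM C g)"
    and tri_hom: "\<And>X Y Z f g h. (X,Y,Z,f,g,h) \<in> Tri C \<Longrightarrow>
                      f \<in> Hom C X Y \<and> g \<in> Hom C Y Z \<and> h \<in> Hom C Z (shO C X)"
    and TR1_iso: "\<And>X Y Z f g h X' Y' Z' f' g' h' u v w.
                   (X,Y,Z,f,g,h) \<in> Tri C \<Longrightarrow>
                   f' \<in> Hom C X' Y' \<Longrightarrow> g' \<in> Hom C Y' Z' \<Longrightarrow> h' \<in> Hom C Z' (shO C X') \<Longrightarrow>
                   iso C X X' u \<Longrightarrow> iso C Y Y' v \<Longrightarrow> iso C Z Z' w \<Longrightarrow>
                   cmp C f' u = cmp C v f \<Longrightarrow> cmp C g' v = cmp C w g \<Longrightarrow>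
                   cmp C h' w = cmp C (shM C u) h \<Longrightarrow>
                   (X',Y',Z',f',g',h') \<in> Tri C"
    and TR1_id: "\<And>X Z. X \<in> Ob C \<Longrightarrow> zero_obj C Z \<Longrightarrow>
                   (X,X,Z,idm C X, zerom C X Z, zerom C Z (shO C X)) \<in> Tri C"
    and TR1_ex: "\<And>X Y f. f \<in> Hom C X Y \<Longrightarrow> \<exists>Z g h. (X,Y,Z,f,g,h) \<in> Tri C"
    and TR2: "\<And>X Y Z f g h. f \<in> Hom C X Y \<Longrightarrow> g \<in> Hom C Y Z \<Longrightarrow> h \<in> Hom C Z (shO C X) \<Longrightarrow>
                   (X,Y,Z,f,g,h) \<in> Tri C \<longleftrightarrow>
                   (Y,Z,shO C X,g,h,negm C (shO C X) (shO C Y) (shM C f)) \<in> Tri C"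
    and TR3: "\<And>X Y Z f g h X' Y' Z' f' g' h' u v.
                   (X,Y,Z,f,g,h) \<in> Tri C \<Longrightarrow> (X',Y',Z',f',g',h') \<in> Tri C \<Longrightarrow>
                   u \<in> Hom C X X' \<Longrightarrow> v \<in> Hom C Y Y' \<Longrightarrow> cmp C v f = cmp C f' u \<Longrightarrow>
                   \<exists>w\<in>Hom C Z Z'. cmp C w g = cmp C g' v \<and> cmp C h' w = cmp C (shM C u) h"
    and TR4: "\<And>X Y Z Z' X' Y' f g i1 j1 i2 j2 i3 j3.
                   (X,Y,Z',f,i1,j1) \<in> Tri C \<Longrightarrow> (Y,Z,X',g,i2,j2) \<in> Tri C \<Longrightarrow>
                   (X,Z,Y',cmp C g f,i3,j3) \<in> Tri C \<Longrightarrow>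
                   \<exists>u\<in>Hom C Z' Y'. \<exists>v\<in>Hom C Y' X'.
                     (Z',Y',X',u,v,cmp C (shM C i1) j2) \<in> Tri C \<and>
                     cmp C u i1 = cmp C i3 g \<and> cmp C j3 u = j1 \<and>
                     cmp C v i3 = i2 \<and> cmp C j2 v = cmp C (shM C f) j3"

text \<open>Subcategories: full (so just a class of objects), additive, closed under
isomorphisms and direct summands.\<close>
definition subcat :: "('o,'m,'x) tricat_scheme \<Rightarrow> 'o set \<Rightarrow> bool" where
  "subcat C D \<longleftrightarrow> D \<subseteq> Ob C \<and>
     (\<forall>Z. zero_obj C Z \<longrightarrow> Z \<in> D) \<and>
     (\<forall>X Y P i1 i2 p1 p2. X \<in> D \<and> Y \<in> D \<and> is_biproduct C X Y P i1 i2 p1 p2 \<longrightarrow> P \<in> D) \<and>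
     (\<forall>X Y u. X \<in> D \<and> iso C X Y u \<longrightarrow> Y \<in> D) \<and>
     (\<forall>X Y P i1 i2 p1 p2. P \<in> D \<and> is_biproduct C X Y P i1 i2 p1 p2 \<longrightarrow> X \<in> D)"

definition ext1_zero :: "('o,'m,'x) tricat_scheme \<Rightarrow> 'o set \<Rightarrow> 'o set \<Rightarrow> bool" where
  "ext1_zero C X Y \<longleftrightarrow> (\<forall>A\<in>X. \<forall>B\<in>Y. Hom C A (shO C B) = {zerom C A (shO C B)})"

definition star :: "('o,'m,'x) tricat_scheme \<Rightarrow> 'o set \<Rightarrow> 'o set \<Rightarrow> 'o set" where
  "star C M N = {X \<in> Ob C. \<exists>A\<in>M. \<exists>B\<in>N. \<exists>f g h. (A,X,B,f,g,h) \<in> Tri C}"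

definition cotorsion_pair :: "('o,'m,'x) tricat_scheme \<Rightarrow> 'o set \<Rightarrow> 'o set \<Rightarrow> bool" where
  "cotorsion_pair C U V \<longleftrightarrow> subcat C U \<and> subcat C V \<and> ext1_zero C U V \<and>
     Ob C = star C U (shO C ` V)"

definition twin_cotorsion_pair :: "('o,'m,'x) tricat_scheme \<Rightarrow> 'o set \<Rightarrow> 'o set \<Rightarrow> 'o set \<Rightarrow> 'o set \<Rightarrow> bool" where
  "twin_cotorsion_pair C S T U V \<longleftrightarrow> cotorsion_pair C S T \<and> cotorsion_pair C U V \<and> ext1_zero C S V"

definition heartW :: "'o set \<Rightarrow> 'o set \<Rightarrow> 'o set" where
  "heartW T U = T \<inter> U"

definition Cminus :: "('o,'m,'x) tricat_scheme \<Rightarrow> 'o set \<Rightarrow> 'o set \<Rightarrow> 'o set \<Rightarrow> 'o set" where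
  "Cminus C S T U = star C (shOi C ` S) (heartW T U)"

definition Cplus :: "('o,'m,'x) tricat_scheme \<Rightarrow> 'o set \<Rightarrow> 'o set \<Rightarrow> 'o set \<Rightarrow> 'o set" where
  "Cplus C T U V = star C (heartW T U) (shO C ` V)"

definition heart :: "('o,'m,'x) tricat_scheme \<Rightarrow> 'o set \<Rightarrow> 'o set \<Rightarrow> 'o set \<Rightarrow> 'o set \<Rightarrow> 'o set" where
  "heart C S T U V = Cplus C T U V \<inter> Cminus C S T U"

definition factors_through :: "('o,'m,'x) tricat_scheme \<Rightarrow> 'o set \<Rightarrow> 'o \<Rightarrow> 'o \<Rightarrow> 'm \<Rightarrow> bool" where
  "factors_through C W X Y f \<longleftrightarrow> f \<in> Hom C X Y \<and>
     (\<exists>E\<in>W. \<exists>g\<in>Hom C X E. \<exists>h\<in>Hom C E Y. f = cmp C h g)"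

text \<open>Equality of images in the ideal quotient by morphisms factoring through W.\<close>
definition stable_eq :: "('o,'m,'x) tricat_scheme \<Rightarrow> 'o set \<Rightarrow> 'o \<Rightarrow> 'o \<Rightarrow> 'm \<Rightarrow> 'm \<Rightarrow> bool" where
  "stable_eq C W X Y f g \<longleftrightarrow> f \<in> Hom C X Y \<and> g \<in> Hom C X Y \<and>
     (\<exists>e. factors_through C W X Y e \<and> f = addm C g e)"

text \<open>The image of f : A \<rightarrow> B is an epimorphism in the ideal quotient of the
full subcategory on the class H by the ideal of maps factoring through W.\<close>
definition quotient_epi :: "('o,'m,'x) tricat_scheme \<Rightarrow> 'o set \<Rightarrow> 'o set \<Rightarrow> 'o \<Rightarrow> 'o \<Rightarrow> 'm \<Rightarrow> bool" where
  "quotient_epi C H W A B f \<longleftrightarrow>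
     (\<forall>D\<in>H. \<forall>g1\<in>Hom C B D. \<forall>g2\<in>Hom C B D.
        stable_eq C W A D (cmp C g1 f) (cmp C g2 f) \<longrightarrow> stable_eq C W B D g1 g2)"

end

theory Submission
  imports Defs
begin

text \<open>Let \<open>t\<^sub>V : M\<^sub>f \<rightarrow> V[1]\<close> be the third map of the \<open>(U,V)\<close>-approximation of \<open>M\<^sub>f\<close>. Then \<open>M\<^sub>f \<in> U\<close>
  iff \<open>t\<^sub>V = 0\<close>, since \<open>t\<^sub>V = 0\<close> makes \<open>M\<^sub>f\<close> a summand of \<open>U\<close>. The octahedral axiom for \<open>a b\<close> gives a
  triangle \<open>T \<rightarrow> Z \<rightarrow> V[1]\<close> whose second map composed with \<open>z\<close> is \<open>t\<^sub>V\<close>; as \<open>Z\<close> is also an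
  extension of \<open>M\<^sub>f\<close> by \<open>S\<close>, this yields \<open>M\<^sub>f \<in> U \<longleftrightarrow> Z \<in> W\<close>.

  If \<open>M\<^sub>f \<in> U\<close> and \<open>g f\<close> factors through \<open>W\<close>, then \<open>g f s\<^sub>A = 0\<close> because \<open>Ext\<^sup>1(S,T) = 0\<close>, so \<open>g\<close>
  factors through \<open>m\<^sub>f\<close>, and then through the \<open>W\<close>-part of its target, which lies in \<open>W * V[1]\<close>.
  Conversely \<open>Z\<close> lies in the heart and \<open>z m\<^sub>f f\<close> factors through \<open>W\<^sub>A\<close>, so if \<open>f\<close> is epic then \<open>z m\<^sub>f\<close>
  factors through \<open>W\<close>; hence \<open>t\<^sub>V m\<^sub>f = 0\<close>, and \<open>t\<^sub>V = 0\<close> because \<open>Ext\<^sup>1(S,V) = 0\<close>.\<close>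

context triangulated begin

lemma hom_objs: "f \<in> Hom C X Y \<Longrightarrow> X \<in> Ob C \<and> Y \<in> Ob C"
  using hom_ob by blast

lemma add_zero_left: assumes f: "f \<in> Hom C X Y" shows "addm C (zerom C X Y) f = f"
proof -
  have "zerom C X Y \<in> Hom C X Y" using hom_objs[OF f] zerom_closed by blast
  then show ?thesis using add_comm[OF f] add_zero[OF f] by simp
qed

lemma add_idem_eq_zero:
  assumes a: "a \<in> Hom C X Y" and aa: "addm C a a = a" shows "a = zerom C X Y"
proof -
  obtain n where n: "n \<in> Hom C X Y" "addm C a n = zerom C X Y" using add_inv[OF a] by blast
  have "addm C a (addm C a n) = zerom C X Y" using aa n add_assoc[OF a a n(1)] by simp
  then show ?thesis using n add_zero a by simp
qed

lemma cmp_zero_left: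
  assumes f: "f \<in> Hom C X Y" and Z: "Z \<in> Ob C"
  shows "cmp C (zerom C Y Z) f = zerom C X Z"
proof -
  have z: "zerom C Y Z \<in> Hom C Y Z" using zerom_closed hom_objs[OF f] Z by blast
  have "addm C (cmp C (zerom C Y Z) f) (cmp C (zerom C Y Z) f) = cmp C (zerom C Y Z) f"
    using cmp_add_left[OF f z z] add_zero[OF z] by simp
  then show ?thesis using add_idem_eq_zero cmp_closed f z by blast
qed

lemma cmp_zero_right:
  assumes g: "g \<in> Hom C Y Z" and X: "X \<in> Ob C"
  shows "cmp C g (zerom C X Y) = zerom C X Z"
proof -
  have z: "zerom C X Y \<in> Hom C X Y" using zerom_closed hom_objs[OF g] X by blast
  have "addm C (cmp C g (zerom C X Y)) (cmp C g (zerom C X Y)) = cmp C g (zerom C X Y)"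
    using cmp_add_right[OF z z g] add_zero[OF z] by simp
  then show ?thesis using add_idem_eq_zero cmp_closed g z by blast
qed

lemma negm_unique:
  assumes a: "a \<in> Hom C X Y" and b: "b \<in> Hom C X Y" and ab: "addm C a b = zerom C X Y"
  shows "negm C X Y a = b"
  unfolding negm_def
proof (rule the_equality)
  show "b \<in> Hom C X Y \<and> addm C a b = zerom C X Y" using b ab by simp
next
  fix g assume g: "g \<in> Hom C X Y \<and> addm C a g = zerom C X Y"
  have "g = addm C g (addm C a b)" using ab add_zero g by simp
  also have "\<dots> = addm C (addm C a g) b" using add_assoc[of g X Y a b] add_comm[of g X Y a] g a b by simp
  also have "\<dots> = b" using g add_zero_left b by simp
  finally show "g = b" .
qed

lemma negm_closed: assumes a: "a \<in> Hom C X Y" shows "negm C X Y a \<in> Hom C X Y"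
  using add_inv[OF a] negm_unique[OF a] by force

lemma add_negm: assumes a: "a \<in> Hom C X Y" shows "addm C a (negm C X Y a) = zerom C X Y"
  using add_inv[OF a] negm_unique[OF a] by force

lemma negm_negm: assumes a: "a \<in> Hom C X Y" shows "negm C X Y (negm C X Y a) = a"
  using negm_unique[OF negm_closed[OF a] a] add_negm[OF a] add_comm[OF a negm_closed[OF a]] by simp

lemma negm_inj:
  assumes "a \<in> Hom C X Y" "b \<in> Hom C X Y" "negm C X Y a = negm C X Y b" shows "a = b"
  by (metis assms negm_negm)

lemma negm_zero: assumes "X \<in> Ob C" "Y \<in> Ob C" shows "negm C X Y (zerom C X Y) = zerom C X Y"
  using negm_unique[OF zerom_closed[OF assms] zerom_closed[OF assms] add_zero[OF zerom_closed[OF assms]]] .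

lemma negm_eq_zeroD: assumes a: "a \<in> Hom C X Y" and "negm C X Y a = zerom C X Y" shows "a = zerom C X Y"
  by (metis assms negm_negm negm_zero hom_objs)

lemma cmp_negm_left:
  assumes f: "f \<in> Hom C X A" and g: "g \<in> Hom C A B"
  shows "cmp C (negm C A B g) f = negm C X B (cmp C g f)"
proof -
  have "addm C (cmp C g f) (cmp C (negm C A B g) f) = cmp C (addm C g (negm C A B g)) f"
    by (rule cmp_add_left[OF f g negm_closed[OF g], symmetric])
  also have "\<dots> = zerom C X B" using add_negm[OF g] cmp_zero_left f hom_objs[OF g] by simp
  finally show ?thesis using negm_unique[OF cmp_closed[OF f g] cmp_closed[OF f negm_closed[OF g]]] by simp
qed

lemma cmp_negm_right:
  assumes f: "f \<in> Hom C X A" and g: "g \<in> Hom C A B"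
  shows "cmp C g (negm C X A f) = negm C X B (cmp C g f)"
proof -
  have "addm C (cmp C g f) (cmp C g (negm C X A f)) = cmp C g (addm C f (negm C X A f))"
    by (rule cmp_add_right[OF f negm_closed[OF f] g, symmetric])
  also have "\<dots> = zerom C X B" using add_negm[OF f] cmp_zero_right g hom_objs[OF f] by simp
  finally show ?thesis using negm_unique[OF cmp_closed[OF f g] cmp_closed[OF negm_closed[OF f] g]] by simp
qed

lemma add_negm_eq_zeroD:
  assumes a: "a \<in> Hom C X Y" and b: "b \<in> Hom C X Y" and "addm C a (negm C X Y b) = zerom C X Y"
  shows "a = b"
  using negm_inj[OF a b] negm_unique[OF a negm_closed[OF b]] assms(3) by simp

lemma add_add_negm:
  assumes f: "f \<in> Hom C X Y" and g: "g \<in> Hom C X Y"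
  shows "addm C g (addm C f (negm C X Y g)) = f"
  using add_assoc[OF g f negm_closed[OF g], symmetric] add_comm[OF g f]
    add_assoc[OF f g negm_closed[OF g]] add_negm[OF g] add_zero[OF f] by simp

lemma add_negm_add:
  assumes g: "g \<in> Hom C X Y" and e: "e \<in> Hom C X Y"
  shows "addm C (addm C g e) (negm C X Y g) = e"
  using add_comm[OF g e] add_assoc[OF e g negm_closed[OF g]] add_negm[OF g] add_zero[OF e] by simp

lemma cmp_diff_left:
  assumes f: "f \<in> Hom C X A" and g1: "g1 \<in> Hom C A B" and g2: "g2 \<in> Hom C A B"
  shows "cmp C (addm C g1 (negm C A B g2)) f = addm C (cmp C g1 f) (negm C X B (cmp C g2 f))"
  using cmp_add_left[OF f g1 negm_closed[OF g2]] cmp_negm_left[OF f g2] by simp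

lemma shM_closed: assumes f: "f \<in> Hom C X Y" shows "shM C f \<in> Hom C (shO C X) (shO C Y)"
  using bij_betwE[OF shM_bij] hom_objs[OF f] f by blast

lemma shM_inj: assumes "f \<in> Hom C X Y" "g \<in> Hom C X Y" "shM C f = shM C g" shows "f = g"
  using inj_onD[OF bij_betw_imp_inj_on[OF shM_bij]] hom_objs assms by blast

lemma shM_surj: assumes "X \<in> Ob C" "Y \<in> Ob C" "k \<in> Hom C (shO C X) (shO C Y)"
  shows "\<exists>f\<in>Hom C X Y. shM C f = k"
  using bij_betw_imp_surj_on[OF shM_bij[OF assms(1,2)]] assms(3) by (metis imageE)

lemma tri_homs: assumes "(X,Y,Z,f,g,h) \<in> Tri C"
  shows "f \<in> Hom C X Y" "g \<in> Hom C Y Z" "h \<in> Hom C Z (shO C X)"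
  using tri_hom[OF assms] by auto

lemma tri_objs: assumes t: "(X,Y,Z,f,g,h) \<in> Tri C"
  shows "X \<in> Ob C" "Y \<in> Ob C" "Z \<in> Ob C"
  using hom_objs[OF tri_homs(1)[OF t]] hom_objs[OF tri_homs(2)[OF t]] by auto

lemma tri_rotate: assumes t: "(X,Y,Z,f,g,h) \<in> Tri C"
  shows "(Y,Z,shO C X,g,h,negm C (shO C X) (shO C Y) (shM C f)) \<in> Tri C"
  using TR2[OF tri_homs[OF t]] t by simp

lemma tri_unrotate: assumes t: "(Y,Z,shO C X,g,h,k) \<in> Tri C" and X: "X \<in> Ob C"
  shows "\<exists>f\<in>Hom C X Y. (X,Y,Z,f,g,h) \<in> Tri C"
proof -
  note hs = tri_homs[OF t]
  obtain f where f: "f \<in> Hom C X Y" "shM C f = negm C (shO C X) (shO C Y) k"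
    using shM_surj[OF X tri_objs(1)[OF t] negm_closed[OF hs(3)]] by blast
  have "negm C (shO C X) (shO C Y) (shM C f) = k" using f(2) negm_negm[OF hs(3)] by simp
  then have "(X,Y,Z,f,g,h) \<in> Tri C" using TR2[OF f(1) hs(1) hs(2)] t by simp
  then show ?thesis using f(1) by blast
qed

lemma tri_unrotate_shift:
  assumes t: "(Y,Z,X,g,h,k) \<in> Tri C" and X: "X \<in> Ob C"
  shows "\<exists>f\<in>Hom C (shOi C X) Y. (shOi C X,Y,Z,f,g,h) \<in> Tri C"
  using tri_unrotate[of Y Z "shOi C X"] t shO_shOi[OF X] shOi_closed[OF X] by simp

lemma tri_rotate_unshift:
  assumes t: "(shOi C X,Y,Z,f,g,h) \<in> Tri C" and X: "X \<in> Ob C"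
  shows "(Y,Z,X,g,h,negm C X (shO C Y) (shM C f)) \<in> Tri C"
  using tri_rotate[OF t] shO_shOi[OF X] by simp

lemma zero_obj_ob: "zero_obj C Z \<Longrightarrow> Z \<in> Ob C"
  unfolding zero_obj_def by simp

lemma tri_comp_zero: assumes t: "(X,Y,Z,f,g,h) \<in> Tri C"
  shows "cmp C g f = zerom C X Z"
proof -
  obtain Z0 where z: "zero_obj C Z0" using zero_obj_ex by blast
  have X: "X \<in> Ob C" using tri_objs[OF t] by simp
  obtain w where w: "w \<in> Hom C Z0 Z" "cmp C w (zerom C X Z0) = cmp C g f"
    using TR3[OF TR1_id[OF X z] t idm_closed[OF X] tri_homs(1)[OF t] refl] by blast
  then show ?thesis using cmp_zero_right[OF w(1) X] by simp
qed

lemma tri_comp_zero_shift: assumes t: "(X,Y,Z,f,g,h) \<in> Tri C"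
  shows "cmp C (shM C f) h = zerom C Z (shO C Y)"
proof -
  note hs = tri_homs[OF t]
  have "negm C Z (shO C Y) (cmp C (shM C f) h) = zerom C Z (shO C Y)"
    using tri_comp_zero[OF tri_rotate[OF tri_rotate[OF t]]] cmp_negm_left[OF hs(3) shM_closed[OF hs(1)]]
    by simp
  then show ?thesis using negm_eq_zeroD[OF cmp_closed[OF hs(3) shM_closed[OF hs(1)]]] by simp
qed

lemma tri_exact_contravariant:
  assumes t: "(X,Y,Z,f,g,h) \<in> Tri C" and u: "u \<in> Hom C Y D" and uf: "cmp C u f = zerom C X D"
  shows "\<exists>w\<in>Hom C Z D. cmp C w g = u"
proof -
  obtain Z0 where z: "zero_obj C Z0" using zero_obj_ex by blast
  have Z0: "Z0 \<in> Ob C" using zero_obj_ob[OF z] .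
  have D: "D \<in> Ob C" and X: "X \<in> Ob C" using hom_objs[OF u] tri_objs[OF t] by auto
  obtain f' where f': "f' \<in> Hom C (shOi C Z0) D" "(shOi C Z0, D, D, f', idm C D, zerom C D Z0) \<in> Tri C"
    using tri_unrotate_shift[OF TR1_id[OF D z] Z0] by blast
  have "cmp C u f = cmp C f' (zerom C X (shOi C Z0))" using uf cmp_zero_right[OF f'(1) X] by simp
  then obtain w where "w \<in> Hom C Z D" "cmp C w g = cmp C (idm C D) u"
    using TR3[OF t f'(2) zerom_closed[OF X shOi_closed[OF Z0]] u] by blast
  then show ?thesis using idm_left[OF u] by auto
qed

lemma tri_exact_covariant:
  assumes t: "(X,Y,Z,f,g,h) \<in> Tri C" and u: "u \<in> Hom C W Y" and gu: "cmp C g u = zerom C W Z"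
  shows "\<exists>u'\<in>Hom C W X. u = cmp C f u'"
proof -
  obtain Z0 where z: "zero_obj C Z0" using zero_obj_ex by blast
  have Z0: "Z0 \<in> Ob C" using zero_obj_ob[OF z] .
  have W: "W \<in> Ob C" using hom_objs[OF u] by simp
  have Zo: "Z \<in> Ob C" "X \<in> Ob C" using tri_objs[OF t] by auto
  note hs = tri_homs[OF t]
  have "cmp C (zerom C Z0 Z) (zerom C W Z0) = cmp C g u"
    using cmp_zero_left[OF zerom_closed[OF W Z0] Zo(1)] gu by simp
  then obtain w where w: "w \<in> Hom C (shO C W) (shO C X)"
    "cmp C (negm C (shO C X) (shO C Y) (shM C f)) w
       = cmp C (shM C u) (negm C (shO C W) (shO C W) (shM C (idm C W)))"
    using TR3[OF tri_rotate[OF TR1_id[OF W z]] tri_rotate[OF t] u zerom_closed[OF Z0 Zo(1)]] by blast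
  have su: "shM C u \<in> Hom C (shO C W) (shO C Y)" using shM_closed[OF u] .
  have sf: "shM C f \<in> Hom C (shO C X) (shO C Y)" using shM_closed[OF hs(1)] .
  have "negm C (shO C W) (shO C Y) (cmp C (shM C f) w) = negm C (shO C W) (shO C Y) (shM C u)"
    using w(2) cmp_negm_left[OF w(1) sf] shM_idm[OF W] idm_right[OF su]
      cmp_negm_right[OF idm_closed[OF shO_closed[OF W]] su] by simp
  then have "cmp C (shM C f) w = shM C u" using negm_inj[OF cmp_closed[OF w(1) sf] su] by simp
  moreover obtain u' where u': "u' \<in> Hom C W X" "shM C u' = w" using shM_surj[OF W Zo(2) w(1)] by blast
  ultimately have "cmp C f u' = u"
    using shM_cmp[OF u'(1) hs(1)] shM_inj[OF cmp_closed[OF u'(1) hs(1)] u] by simp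
  then show ?thesis using u'(1) by auto
qed

text \<open>As \<open>p r = 1\<close>, the connecting map \<open>h\<close> vanishes, so \<open>q\<close> has a section \<open>s\<close>; replacing \<open>s\<close> by
  \<open>s - r p s\<close> makes it orthogonal to \<open>p\<close>.\<close>

lemma tri_split_mono_section:
  assumes t: "(X,Y,K,r,q,h) \<in> Tri C" and p: "p \<in> Hom C Y X" and pr: "cmp C p r = idm C X"
  shows "\<exists>s\<in>Hom C K Y. cmp C q s = idm C K \<and> cmp C p s = zerom C K X"
proof -
  note hs = tri_homs[OF t]
  have X: "X \<in> Ob C" and K: "K \<in> Ob C" using tri_objs[OF t] by auto
  have sp: "shM C p \<in> Hom C (shO C Y) (shO C X)" using shM_closed[OF p] .
  have "h = cmp C (cmp C (shM C p) (shM C r)) h"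
    using shM_cmp[OF hs(1) p] pr shM_idm[OF X] idm_left[OF hs(3)] by simp
  also have "\<dots> = zerom C K (shO C X)"
    using cmp_assoc[OF hs(3) shM_closed[OF hs(1)] sp] tri_comp_zero_shift[OF t] cmp_zero_right[OF sp K]
    by simp
  finally have "cmp C h (idm C K) = zerom C K (shO C X)" using idm_right[OF hs(3)] by simp
  then obtain s where s: "s \<in> Hom C K Y" "idm C K = cmp C q s"
    using tri_exact_covariant[OF tri_rotate[OF t] idm_closed[OF K]] by blast
  define rps where "rps = cmp C r (cmp C p s)"
  have ps: "cmp C p s \<in> Hom C K X" using cmp_closed[OF s(1) p] .
  have rps: "rps \<in> Hom C K Y" unfolding rps_def using cmp_closed[OF ps hs(1)] .
  have "cmp C q rps = zerom C K K"
    unfolding rps_def using cmp_assoc[OF ps hs(1) hs(2)] tri_comp_zero[OF t] cmp_zero_left[OF ps K] by simp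
  then have "cmp C q (addm C s (negm C K Y rps)) = idm C K"
    using cmp_add_right[OF s(1) negm_closed[OF rps] hs(2)] s(2) cmp_negm_right[OF rps hs(2)]
      negm_zero[OF K K] add_zero[OF idm_closed[OF K]] by simp
  moreover have "cmp C p rps = cmp C p s"
    unfolding rps_def using cmp_assoc[OF ps hs(1) p] pr idm_left[OF ps] by simp
  then have "cmp C p (addm C s (negm C K Y rps)) = zerom C K X"
    using cmp_add_right[OF s(1) negm_closed[OF rps] p] cmp_negm_right[OF rps p] add_negm[OF ps] by simp
  ultimately show ?thesis using add_closed[OF s(1) negm_closed[OF rps]] by blast
qed

lemma tri_split_mono_biproduct:
  assumes t: "(X,Y,K,r,q,h) \<in> Tri C" and p: "p \<in> Hom C Y X" and pr: "cmp C p r = idm C X"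
    and s: "s \<in> Hom C K Y" and qs: "cmp C q s = idm C K" and ps: "cmp C p s = zerom C K X"
  shows "is_biproduct C X K Y r s p q"
proof -
  note hs = tri_homs[OF t]
  have X: "X \<in> Ob C" and Y: "Y \<in> Ob C" and K: "K \<in> Ob C" using tri_objs[OF t] by auto
  have qr: "cmp C q r = zerom C X K" by (rule tri_comp_zero[OF t])
  have rp: "cmp C r p \<in> Hom C Y Y" and sq: "cmp C s q \<in> Hom C Y Y"
    using cmp_closed[OF p hs(1)] cmp_closed[OF hs(2) s] by auto
  define m where "m = addm C (cmp C r p) (cmp C s q)"
  have m: "m \<in> Hom C Y Y" unfolding m_def using add_closed[OF rp sq] .
  define d where "d = addm C (idm C Y) (negm C Y Y m)"
  have idY: "idm C Y \<in> Hom C Y Y" using idm_closed[OF Y] .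
  have d: "d \<in> Hom C Y Y" unfolding d_def using add_closed[OF idY negm_closed[OF m]] .
  have "cmp C m r = addm C r (zerom C X Y)"
    unfolding m_def using cmp_add_left[OF hs(1) rp sq] cmp_assoc[OF hs(1) p hs(1), symmetric]
      cmp_assoc[OF hs(1) hs(2) s, symmetric] pr qr idm_right[OF hs(1)] cmp_zero_right[OF s X] by simp
  then have "cmp C d r = zerom C X Y"
    unfolding d_def using cmp_diff_left[OF hs(1) idY m] idm_left[OF hs(1)] add_zero[OF hs(1)]
      add_negm[OF hs(1)] by simp
  then obtain d' where d': "d' \<in> Hom C K Y" "cmp C d' q = d" using tri_exact_contravariant[OF t d] by blast
  have "cmp C m s = addm C (zerom C K Y) s"
    unfolding m_def using cmp_add_left[OF s rp sq] cmp_assoc[OF s p hs(1), symmetric]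
      cmp_assoc[OF s hs(2) s, symmetric] ps qs idm_right[OF s] cmp_zero_right[OF hs(1) K] by simp
  then have "cmp C d s = zerom C K Y"
    unfolding d_def using cmp_diff_left[OF s idY m] idm_left[OF s] add_zero_left[OF s] add_negm[OF s]
    by simp
  then have "d' = zerom C K Y" using qs idm_right[OF d'(1)] cmp_assoc[OF s hs(2) d'(1)] d'(2) by simp
  then have "d = zerom C Y Y" using d'(2) cmp_zero_left[OF hs(2) Y] by simp
  then have "idm C Y = m" using add_negm_eq_zeroD[OF idY m] unfolding d_def by simp
  then show ?thesis
    unfolding is_biproduct_def using hs(1,2) p s pr qs qr ps m_def by simp
qed

lemma subcat_retract:
  assumes D: "subcat C D" and Y: "Y \<in> D" and r: "r \<in> Hom C X Y" and p: "p \<in> Hom C Y X"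
    and pr: "cmp C p r = idm C X"
  shows "X \<in> D"
proof -
  obtain K q h where t: "(X,Y,K,r,q,h) \<in> Tri C" using TR1_ex[OF r] by blast
  obtain s where "s \<in> Hom C K Y" "cmp C q s = idm C K" "cmp C p s = zerom C K X"
    using tri_split_mono_section[OF t p pr] by blast
  then have "is_biproduct C X K Y r s p q" using tri_split_mono_biproduct[OF t p pr] by blast
  then show ?thesis using D Y unfolding subcat_def by blast
qed

lemma subcat_tri_zero_middle:
  assumes D: "subcat C D" and t: "(X,Y,Z,f,g,h) \<in> Tri C" and X: "X \<in> D"
    and g: "g = zerom C Y Z"
  shows "Y \<in> D"
proof -
  note hs = tri_homs[OF t]
  have Y: "Y \<in> Ob C" using tri_objs[OF t] by simp
  have "cmp C g (idm C Y) = zerom C Y Z" using idm_right[OF hs(2)] g by simp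
  then obtain r where "r \<in> Hom C Y X" "idm C Y = cmp C f r"
    using tri_exact_covariant[OF t idm_closed[OF Y]] by blast
  then show ?thesis using subcat_retract[OF D X _ hs(1)] by simp
qed


lemma subcat_ob: "subcat C D \<Longrightarrow> X \<in> D \<Longrightarrow> X \<in> Ob C"
  unfolding subcat_def by blast

lemma ext1_zeroD:
  "ext1_zero C D E \<Longrightarrow> A \<in> D \<Longrightarrow> B \<in> E \<Longrightarrow> e \<in> Hom C A (shO C B) \<Longrightarrow> e = zerom C A (shO C B)"
  unfolding ext1_zero_def by blast

lemma ext1_zero_unshift:
  assumes ez: "ext1_zero C D E" and S: "S \<in> D" "S \<in> Ob C" and X: "X \<in> E"
    and e: "e \<in> Hom C (shOi C S) X"
  shows "e = zerom C (shOi C S) X"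
proof -
  have Si: "shOi C S \<in> Ob C" and Xo: "X \<in> Ob C" using hom_objs[OF e] by auto
  have z: "zerom C (shOi C S) X \<in> Hom C (shOi C S) X" using zerom_closed[OF Si Xo] .
  have "shM C e \<in> Hom C S (shO C X)" "shM C (zerom C (shOi C S) X) \<in> Hom C S (shO C X)"
    using shM_closed[OF e] shM_closed[OF z] shO_shOi[OF S(2)] by auto
  then have "shM C e = zerom C S (shO C X)" "shM C (zerom C (shOi C S) X) = zerom C S (shO C X)"
    using ext1_zeroD[OF ez S(1) X] by blast+
  then show ?thesis using shM_inj[OF e z] by simp
qed

lemma cotorsion_pair_left_char:
  assumes cp: "cotorsion_pair C D E" and Y: "Y \<in> Ob C"
    and z: "\<And>E' e. E' \<in> E \<Longrightarrow> e \<in> Hom C Y (shO C E') \<Longrightarrow> e = zerom C Y (shO C E')"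
  shows "Y \<in> D"
proof -
  have "Y \<in> star C D (shO C ` E)" using cp Y unfolding cotorsion_pair_def by blast
  then obtain A E' f g h where "A \<in> D" "E' \<in> E" and t: "(A,Y,shO C E',f,g,h) \<in> Tri C"
    unfolding star_def by blast
  then show ?thesis
    using subcat_tri_zero_middle[OF _ t] z[OF _ tri_homs(2)[OF t]] cp unfolding cotorsion_pair_def by blast
qed

lemma cotorsion_pair_left_extension:
  assumes cp: "cotorsion_pair C D E" and t: "(X,Y,Z,f,g,h) \<in> Tri C" and X: "X \<in> D" and Z: "Z \<in> D"
  shows "Y \<in> D"
proof (rule cotorsion_pair_left_char[OF cp tri_objs(2)[OF t]])
  fix E' e assume E': "E' \<in> E" and e: "e \<in> Hom C Y (shO C E')"
  note hs = tri_homs[OF t]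
  have ez: "ext1_zero C D E" using cp unfolding cotorsion_pair_def by blast
  have "cmp C e f = zerom C X (shO C E')" using ext1_zeroD[OF ez X E' cmp_closed[OF hs(1) e]] .
  then obtain e' where "e' \<in> Hom C Z (shO C E')" "cmp C e' g = e"
    using tri_exact_contravariant[OF t e] by blast
  then show "e = zerom C Y (shO C E')"
    using ext1_zeroD[OF ez Z E'] cmp_zero_left[OF hs(2)] hom_objs[OF e] by auto
qed


lemma stable_eq_iff_factors_through_diff:
  assumes f: "f \<in> Hom C X Y" and g: "g \<in> Hom C X Y"
  shows "stable_eq C W X Y f g \<longleftrightarrow> factors_through C W X Y (addm C f (negm C X Y g))"
proof
  assume "stable_eq C W X Y f g"
  then obtain e where e: "factors_through C W X Y e" and "f = addm C g e"
    unfolding stable_eq_def by blast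
  then show "factors_through C W X Y (addm C f (negm C X Y g))"
    using add_negm_add[OF g] unfolding factors_through_def by auto
next
  assume "factors_through C W X Y (addm C f (negm C X Y g))"
  then show "stable_eq C W X Y f g" unfolding stable_eq_def using f g add_add_negm[OF f g] by metis
qed

lemma quotient_epiI:
  assumes f: "f \<in> Hom C A B"
    and lift: "\<And>D g. D \<in> H \<Longrightarrow> g \<in> Hom C B D \<Longrightarrow> factors_through C W A D (cmp C g f)
                 \<Longrightarrow> factors_through C W B D g"
  shows "quotient_epi C H W A B f"
  unfolding quotient_epi_def
proof (intro ballI impI)
  fix D g1 g2 assume D: "D \<in> H" and g1: "g1 \<in> Hom C B D" and g2: "g2 \<in> Hom C B D"
    and "stable_eq C W A D (cmp C g1 f) (cmp C g2 f)"
  then have "factors_through C W A D (cmp C (addm C g1 (negm C B D g2)) f)"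
    using stable_eq_iff_factors_through_diff cmp_closed[OF f] cmp_diff_left[OF f g1 g2] by simp
  then show "stable_eq C W B D g1 g2"
    using stable_eq_iff_factors_through_diff[OF g1 g2] lift[OF D add_closed[OF g1 negm_closed[OF g2]]]
    by simp
qed

lemma quotient_epiD:
  assumes epi: "quotient_epi C H W A B f" and f: "f \<in> Hom C A B" and D: "D \<in> H"
    and g: "g \<in> Hom C B D" and gf: "factors_through C W A D (cmp C g f)"
  shows "factors_through C W B D g"
proof -
  have A: "A \<in> Ob C" and Bo: "B \<in> Ob C" and Do: "D \<in> Ob C" using hom_objs f g by auto
  have "stable_eq C W A D (cmp C g f) (cmp C (zerom C B D) f)"
    using stable_eq_iff_factors_through_diff cmp_closed[OF f g] cmp_zero_left[OF f Do]
      negm_zero[OF A Do] add_zero gf zerom_closed[OF A Do] by simp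
  then have "stable_eq C W B D g (zerom C B D)"
    using epi D g zerom_closed[OF Bo Do] unfolding quotient_epi_def by blast
  then show ?thesis
    using stable_eq_iff_factors_through_diff[OF g zerom_closed[OF Bo Do]] negm_zero[OF Bo Do] add_zero[OF g]
    by simp
qed

end

context
  fixes C :: "('o,'m,'x) tricat_scheme" and Sc Tc Uc Vc :: "'o set"
  assumes triangulated: "triangulated C" and twin: "twin_cotorsion_pair C Sc Tc Uc Vc"
begin

interpretation triangulated C by (rule triangulated)

lemma twin_cotorsion_pairs: "cotorsion_pair C Sc Tc" "cotorsion_pair C Uc Vc"
  using twin unfolding twin_cotorsion_pair_def by auto

lemma twin_subcats: "subcat C Sc" "subcat C Tc" "subcat C Uc" "subcat C Vc"
  using twin_cotorsion_pairs unfolding cotorsion_pair_def by auto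

lemma twin_ext1_zero: "ext1_zero C Sc Tc" "ext1_zero C Uc Vc" "ext1_zero C Sc Vc"
  using twin unfolding twin_cotorsion_pair_def cotorsion_pair_def by auto

lemma twin_S_subset_U: "X \<in> Sc \<Longrightarrow> X \<in> Uc"
  using cotorsion_pair_left_char[OF twin_cotorsion_pairs(2)] ext1_zeroD[OF twin_ext1_zero(3)]
    subcat_ob[OF twin_subcats(1)] by blast

lemma twin_U_subset_Cminus:
  assumes Q: "Q \<in> Uc"
  shows "Q \<in> Cminus C Sc Tc Uc"
proof -
  have Qo: "Q \<in> Ob C" using subcat_ob[OF twin_subcats(3) Q] .
  have "shO C Q \<in> star C Sc (shO C ` Tc)"
    using twin_cotorsion_pairs(1) shO_closed[OF Qo] unfolding cotorsion_pair_def by blast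
  then obtain S' T' f g h where S': "S' \<in> Sc" and T': "T' \<in> Tc"
    and t: "(S', shO C Q, shO C T', f, g, h) \<in> Tri C"
    unfolding star_def by blast
  have T'o: "T' \<in> Ob C" and S'o: "S' \<in> Ob C"
    using subcat_ob[OF twin_subcats(2) T'] subcat_ob[OF twin_subcats(1) S'] by auto
  obtain f1 where "(T', S', shO C Q, f1, f, g) \<in> Tri C" using tri_unrotate[OF t T'o] by blast
  then obtain f2 where t2: "(Q, T', S', f2, f1, f) \<in> Tri C" using tri_unrotate[OF _ Qo] by blast
  then obtain f3 where "(shOi C S', Q, T', f3, f2, f1) \<in> Tri C" using tri_unrotate_shift[OF _ S'o] by blast
  moreover have "T' \<in> Uc"
    using cotorsion_pair_left_extension[OF twin_cotorsion_pairs(2) t2 Q twin_S_subset_U[OF S']] .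
  ultimately show ?thesis unfolding Cminus_def star_def heartW_def using Qo S' T' by blast
qed

text \<open>Two applications of the octahedral axiom: the cone \<open>Q\<close> of \<open>S1[-1] \<rightarrow> X \<rightarrow> Y\<close> is an extension of
  \<open>S'\<close> by \<open>W1\<close>, hence in \<open>U\<close>, and the cone of \<open>Y \<rightarrow> Q \<rightarrow> W2\<close> is an extension of \<open>S2\<close> by \<open>S1\<close>.\<close>

lemma twin_Cminus_extension:
  assumes X: "X \<in> Cminus C Sc Tc Uc"
    and t: "(X,Y,S',al,be,ga) \<in> Tri C" and S': "S' \<in> Sc"
  shows "Y \<in> Cminus C Sc Tc Uc"
proof -
  note cpST = twin_cotorsion_pairs(1) and cpUV = twin_cotorsion_pairs(2)
  obtain S1 W1 s1 w1 t1 where S1: "S1 \<in> Sc" and W1: "W1 \<in> Uc"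
    and tX: "(shOi C S1, X, W1, s1, w1, t1) \<in> Tri C"
    using X unfolding Cminus_def star_def heartW_def by blast
  have S1o: "S1 \<in> Ob C" using subcat_ob[OF twin_subcats(1) S1] .
  obtain Q q r where tQ: "(shOi C S1, Y, Q, cmp C al s1, q, r) \<in> Tri C"
    using TR1_ex[OF cmp_closed[OF tri_homs(1)[OF tX] tri_homs(1)[OF t]]] by blast
  obtain u v where "(W1, Q, S', u, v, cmp C (shM C w1) ga) \<in> Tri C"
    using TR4[OF tX t tQ] by blast
  then have "Q \<in> Uc" using cotorsion_pair_left_extension[OF cpUV _ W1 twin_S_subset_U[OF S']] by blast
  then obtain S2 W2 s2 w2 t2 where S2: "S2 \<in> Sc" and W2: "W2 \<in> Tc" "W2 \<in> Uc"
    and tQ2: "(shOi C S2, Q, W2, s2, w2, t2) \<in> Tri C"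
    using twin_U_subset_Cminus unfolding Cminus_def star_def heartW_def by blast
  have S2o: "S2 \<in> Ob C" using subcat_ob[OF twin_subcats(1) S2] .
  obtain E e1 e2 where tE: "(Y, W2, E, cmp C w2 q, e1, e2) \<in> Tri C"
    using TR1_ex[OF cmp_closed[OF tri_homs(2)[OF tQ] tri_homs(2)[OF tQ2]]] by blast
  obtain u' v' where "(S1, E, S2, u', v', cmp C (shM C r) (negm C S2 (shO C Q) (shM C s2))) \<in> Tri C"
    using TR4[OF tri_rotate_unshift[OF tQ S1o] tri_rotate_unshift[OF tQ2 S2o] tE] by blast
  then have ES: "E \<in> Sc" using cotorsion_pair_left_extension[OF cpST _ S1 S2] by blast
  then obtain f where "(shOi C E, Y, W2, f, cmp C w2 q, e1) \<in> Tri C"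
    using tri_unrotate_shift[OF tE subcat_ob[OF twin_subcats(1)]] by blast
  then show ?thesis unfolding Cminus_def star_def heartW_def using tri_objs(2)[OF t] ES W2 by blast
qed

end

locale heart_morphism_cone = triangulated C for C :: "('o,'m,'x) tricat_scheme" +
  fixes Sc Tc Uc Vc :: "'o set"
    and A B S\<^sub>A W\<^sub>A M\<^sub>f U V S T Z :: 'o
    and f s\<^sub>A w\<^sub>A t\<^sub>A m\<^sub>f t\<^sub>f v a t\<^sub>V x b t\<^sub>T z t\<^sub>Z :: 'm
  assumes twin: "twin_cotorsion_pair C Sc Tc Uc Vc"
    and B_heart: "B \<in> heart C Sc Tc Uc Vc"
    and f: "f \<in> Hom C A B"
    and S\<^sub>A: "S\<^sub>A \<in> Sc" and W\<^sub>A: "W\<^sub>A \<in> heartW Tc Uc"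
    and tri_A: "(shOi C S\<^sub>A, A, W\<^sub>A, s\<^sub>A, w\<^sub>A, t\<^sub>A) \<in> Tri C"
    and tri_f: "(shOi C S\<^sub>A, B, M\<^sub>f, cmp C f s\<^sub>A, m\<^sub>f, t\<^sub>f) \<in> Tri C"
    and U: "U \<in> Uc" and V: "V \<in> Vc"
    and tri_V: "(V, U, M\<^sub>f, v, a, t\<^sub>V) \<in> Tri C"
    and S: "S \<in> Sc" and T: "T \<in> Tc"
    and tri_T: "(shOi C T, shOi C S, U, x, b, t\<^sub>T) \<in> Tri C"
    and tri_Z: "(shOi C S, M\<^sub>f, Z, cmp C a b, z, t\<^sub>Z) \<in> Tri C"
begin

lemmas cotorsion_pairs = twin_cotorsion_pairs[OF triangulated_axioms twin]
lemmas subcats = twin_subcats[OF triangulated_axioms twin]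
lemmas ext1_zeros = twin_ext1_zero[OF triangulated_axioms twin]
lemmas S_subset_U = twin_S_subset_U[OF triangulated_axioms twin]

lemma objs: "S \<in> Ob C" "T \<in> Ob C" "V \<in> Ob C" "S\<^sub>A \<in> Ob C"
  using subcat_ob subcats S T V S\<^sub>A by auto

lemma tri_Z_rotated: "(M\<^sub>f, Z, S, z, t\<^sub>Z, negm C S (shO C M\<^sub>f) (shM C (cmp C a b))) \<in> Tri C"
  using tri_rotate_unshift[OF tri_Z objs(1)] .

lemma tri_f_rotated: "(B, M\<^sub>f, S\<^sub>A, m\<^sub>f, t\<^sub>f, negm C S\<^sub>A (shO C B) (shM C (cmp C f s\<^sub>A))) \<in> Tri C"
  using tri_rotate_unshift[OF tri_f objs(4)] .

lemma octahedron:
  obtains u w k where "(T, Z, shO C V, u, w, k) \<in> Tri C" and "cmp C w z = t\<^sub>V"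
  using TR4[OF tri_rotate_unshift[OF tri_T objs(2)] tri_rotate[OF tri_V] tri_Z] by blast

lemma M_in_U_iff_t_V_zero: "M\<^sub>f \<in> Uc \<longleftrightarrow> t\<^sub>V = zerom C M\<^sub>f (shO C V)"
  using ext1_zeroD[OF ext1_zeros(2) _ V tri_homs(3)[OF tri_V]]
    subcat_tri_zero_middle[OF subcats(3) tri_rotate[OF tri_V] U] by blast

lemma Z_in_W_if_M_in_U:
  assumes M: "M\<^sub>f \<in> Uc"
  shows "Z \<in> heartW Tc Uc"
proof -
  obtain u w k where tT: "(T, Z, shO C V, u, w, k) \<in> Tri C" and wz: "cmp C w z = t\<^sub>V"
    using octahedron .
  have w: "w \<in> Hom C Z (shO C V)" using tri_homs(2)[OF tT] .
  have "cmp C w z = zerom C M\<^sub>f (shO C V)" using wz M M_in_U_iff_t_V_zero by simp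
  then obtain k' where k': "k' \<in> Hom C S (shO C V)" "cmp C k' t\<^sub>Z = w"
    using tri_exact_contravariant[OF tri_Z_rotated w] by blast
  then have "w = zerom C Z (shO C V)"
    using ext1_zeroD[OF ext1_zeros(3) S V k'(1)]
      cmp_zero_left[OF tri_homs(2)[OF tri_Z_rotated] shO_closed[OF objs(3)]] by simp
  then have "Z \<in> Tc" using subcat_tri_zero_middle[OF subcats(2) tT T] by simp
  moreover have "Z \<in> Uc"
    using cotorsion_pair_left_extension[OF cotorsion_pairs(2) tri_Z_rotated M S_subset_U[OF S]] .
  ultimately show ?thesis unfolding heartW_def by simp
qed

lemma M_in_U_if_Z_in_W:
  assumes Z: "Z \<in> heartW Tc Uc"
  shows "M\<^sub>f \<in> Uc"
proof -
  obtain u w k where tT: "(T, Z, shO C V, u, w, k) \<in> Tri C" and wz: "cmp C w z = t\<^sub>V"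
    using octahedron .
  have "w = zerom C Z (shO C V)"
    using ext1_zeroD[OF ext1_zeros(2) _ V tri_homs(2)[OF tT]] Z unfolding heartW_def by blast
  then show ?thesis
    using wz cmp_zero_left[OF tri_homs(2)[OF tri_Z] shO_closed[OF objs(3)]] M_in_U_iff_t_V_zero by simp
qed

lemma Z_in_heart: "Z \<in> heart C Sc Tc Uc Vc"
proof -
  obtain u w k where tT: "(T, Z, shO C V, u, w, k) \<in> Tri C" using octahedron .
  have "(U, T, S, t\<^sub>T, negm C T (shO C (shOi C S)) (shM C x), negm C S (shO C U) (shM C b)) \<in> Tri C"
    using tri_rotate[OF tri_rotate_unshift[OF tri_T objs(2)]] shO_shOi[OF objs(1)] by simp
  then have "T \<in> Uc" using cotorsion_pair_left_extension[OF cotorsion_pairs(2) _ U S_subset_U[OF S]] by blast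
  then have "Z \<in> Cplus C Tc Uc Vc"
    unfolding Cplus_def star_def heartW_def using tri_objs(2)[OF tT] tT T V by blast
  moreover have "Z \<in> Cminus C Sc Tc Uc"
    using twin_Cminus_extension[OF triangulated_axioms twin] B_heart tri_f_rotated tri_Z_rotated S\<^sub>A S
    unfolding heart_def by blast
  ultimately show ?thesis unfolding heart_def by blast
qed

lemma quotient_epi_if_M_in_U:
  assumes M: "M\<^sub>f \<in> Uc"
  shows "quotient_epi C (heart C Sc Tc Uc Vc) (heartW Tc Uc) A B f"
proof (rule quotient_epiI[OF f])
  fix D g assume D: "D \<in> heart C Sc Tc Uc Vc" and g: "g \<in> Hom C B D"
    and "factors_through C (heartW Tc Uc) A D (cmp C g f)"
  then obtain E k h where E: "E \<in> heartW Tc Uc" and k: "k \<in> Hom C A E" and h: "h \<in> Hom C E D"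
    and gf: "cmp C g f = cmp C h k"
    unfolding factors_through_def by blast
  have s\<^sub>A: "s\<^sub>A \<in> Hom C (shOi C S\<^sub>A) A" using tri_homs(1)[OF tri_A] .
  have "cmp C k s\<^sub>A = zerom C (shOi C S\<^sub>A) E"
    using ext1_zero_unshift[OF ext1_zeros(1) S\<^sub>A objs(4) _ cmp_closed[OF s\<^sub>A k]] E
    unfolding heartW_def by blast
  then have "cmp C g (cmp C f s\<^sub>A) = zerom C (shOi C S\<^sub>A) D"
    using cmp_assoc[OF s\<^sub>A f g] gf cmp_assoc[OF s\<^sub>A k h] cmp_zero_right[OF h] hom_objs[OF s\<^sub>A] by simp
  then obtain g' where g': "g' \<in> Hom C M\<^sub>f D" "cmp C g' m\<^sub>f = g"
    using tri_exact_contravariant[OF tri_f g] by blast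
  obtain W' V' i p q where W': "W' \<in> heartW Tc Uc" and V': "V' \<in> Vc"
    and tD: "(W', D, shO C V', i, p, q) \<in> Tri C"
    using D unfolding heart_def Cplus_def star_def by blast
  have "cmp C p g' = zerom C M\<^sub>f (shO C V')"
    using ext1_zeroD[OF ext1_zeros(2) M V' cmp_closed[OF g'(1) tri_homs(2)[OF tD]]] .
  then obtain h' where h': "h' \<in> Hom C M\<^sub>f W'" "g' = cmp C i h'"
    using tri_exact_covariant[OF tD g'(1)] by blast
  have "g = cmp C i (cmp C h' m\<^sub>f)"
    using g' h' cmp_assoc[OF tri_homs(2)[OF tri_f] h'(1) tri_homs(1)[OF tD]] by simp
  then show "factors_through C (heartW Tc Uc) B D g"
    unfolding factors_through_def
    using g W' cmp_closed[OF tri_homs(2)[OF tri_f] h'(1)] tri_homs(1)[OF tD] by blast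
qed

lemma M_in_U_if_quotient_epi:
  assumes epi: "quotient_epi C (heart C Sc Tc Uc Vc) (heartW Tc Uc) A B f"
  shows "M\<^sub>f \<in> Uc"
proof -
  obtain u w k where tT: "(T, Z, shO C V, u, w, k) \<in> Tri C" and wz: "cmp C w z = t\<^sub>V"
    using octahedron .
  have m: "m\<^sub>f \<in> Hom C B M\<^sub>f" and z: "z \<in> Hom C M\<^sub>f Z" and w: "w \<in> Hom C Z (shO C V)"
    and w\<^sub>A: "w\<^sub>A \<in> Hom C A W\<^sub>A"
    using tri_homs[OF tri_f] tri_homs[OF tri_Z] tri_homs[OF tT] tri_homs[OF tri_A] by auto
  have zm: "cmp C z m\<^sub>f \<in> Hom C B Z" using cmp_closed[OF m z] .
  have "cmp C (cmp C m\<^sub>f f) s\<^sub>A = zerom C (shOi C S\<^sub>A) M\<^sub>f"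
    using tri_comp_zero[OF tri_f] cmp_assoc[OF tri_homs(1)[OF tri_A] f m] by simp
  then obtain y where y: "y \<in> Hom C W\<^sub>A M\<^sub>f" "cmp C y w\<^sub>A = cmp C m\<^sub>f f"
    using tri_exact_contravariant[OF tri_A cmp_closed[OF f m]] by blast
  have "cmp C (cmp C z m\<^sub>f) f = cmp C (cmp C z y) w\<^sub>A"
    using cmp_assoc[OF f m z] y(2) cmp_assoc[OF w\<^sub>A y(1) z] by simp
  then have "factors_through C (heartW Tc Uc) A Z (cmp C (cmp C z m\<^sub>f) f)"
    unfolding factors_through_def using cmp_closed[OF f zm] W\<^sub>A w\<^sub>A cmp_closed[OF y(1) z] by metis
  then obtain E k h where E: "E \<in> heartW Tc Uc" and k: "k \<in> Hom C B E" and h: "h \<in> Hom C E Z"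
    and zmk: "cmp C z m\<^sub>f = cmp C h k"
    using quotient_epiD[OF epi f Z_in_heart zm] unfolding factors_through_def by blast
  have "cmp C w h = zerom C E (shO C V)"
    using ext1_zeroD[OF ext1_zeros(2) _ V cmp_closed[OF h w]] E unfolding heartW_def by blast
  then have "cmp C t\<^sub>V m\<^sub>f = zerom C B (shO C V)"
    using wz cmp_assoc[OF m z w] zmk cmp_assoc[OF k h w] cmp_zero_left[OF k shO_closed[OF objs(3)]]
    by simp
  then obtain k' where k': "k' \<in> Hom C S\<^sub>A (shO C V)" "cmp C k' t\<^sub>f = t\<^sub>V"
    using tri_exact_contravariant[OF tri_f_rotated tri_homs(3)[OF tri_V]] by blast
  then show ?thesis
    using ext1_zeroD[OF ext1_zeros(3) S\<^sub>A V k'(1)] M_in_U_iff_t_V_zero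
      cmp_zero_left[OF tri_homs(2)[OF tri_f_rotated] shO_closed[OF objs(3)]] by simp
qed

end

theorem corollary4p5:
  fixes C :: "('o,'m,'x) tricat_scheme"
    and Sc Tc Uc Vc :: "'o set"
  assumes "triangulated C"
    and "twin_cotorsion_pair C Sc Tc Uc Vc"
    and "A \<in> heart C Sc Tc Uc Vc" and "B \<in> heart C Sc Tc Uc Vc"
    and "f \<in> Hom C A B"
    and "S\<^sub>A \<in> Sc" and "W\<^sub>A \<in> heartW Tc Uc"
    and "(shOi C S\<^sub>A, A, W\<^sub>A, s\<^sub>A, w\<^sub>A, t\<^sub>A) \<in> Tri C"
    and "(shOi C S\<^sub>A, B, M\<^sub>f, cmp C f s\<^sub>A, m\<^sub>f, t\<^sub>f) \<in> Tri C"
    and "U \<in> Uc" and "V \<in> Vc"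
    and "(V, U, M\<^sub>f, v, a, t\<^sub>V) \<in> Tri C"
    and "S \<in> Sc" and "T \<in> Tc"
    and "(shOi C T, shOi C S, U, x, b, t\<^sub>T) \<in> Tri C"
    and "(shOi C S, M\<^sub>f, Z, cmp C a b, z, t\<^sub>Z) \<in> Tri C"
  shows "(quotient_epi C (heart C Sc Tc Uc Vc) (heartW Tc Uc) A B f \<longleftrightarrow> Z \<in> heartW Tc Uc)
       \<and> (Z \<in> heartW Tc Uc \<longleftrightarrow> M\<^sub>f \<in> Uc)"
proof -
  interpret heart_morphism_cone C Sc Tc Uc Vc A B S\<^sub>A W\<^sub>A M\<^sub>f U V S T Z
      f s\<^sub>A w\<^sub>A t\<^sub>A m\<^sub>f t\<^sub>f v a t\<^sub>V x b t\<^sub>T z t\<^sub>Z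
    using assms(1,2,4-16) by (intro heart_morphism_cone.intro heart_morphism_cone_axioms.intro)
  show ?thesis
    using quotient_epi_if_M_in_U M_in_U_if_quotient_epi Z_in_W_if_M_in_U M_in_U_if_Z_in_W by blast
qed

end
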